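(* Let $\mathcal N$ be a feedforward ANN consisting of MatMul layers (each a convolution or fully-connected linear map with bias followed by batch normalization) alternating with QCFS activation layers, beginning with a MatMul layer followed by a QCFS layer and ending with a MatMul layer, where the $n$-th QCFS layer has quantization step $L_n$ and threshold $\theta_n$. Let $\mathcal M$ be the PASC formulation of $\mathcal N$ (described in the context). Then $\mathcal M$ and $\mathcal N$ are mathematically equivalent: for every input $z$ and every output class $c\in\mathbf C$, $f^{z}_{\mathcal M}(c)=f^{z}_{\mathcal N}(c)$.
   Context: QCFS activation with quantization step $L$ and threshold $\theta$: $\widehat h(y)=\theta\,\mathrm{clip}\!\left(\frac1L\left\lfloor\frac{yL}{\theta}+\frac12\right\rfloor,0,1\right)$ elementwise, with $\mathrm{clip}(u,0,1)=\min(\max(u,0),1)$. $H(y)=1$ if $y\ge0$, else $0$. A MatMul layer computes $y\mapsto\gamma\frac{y*W+b-\mu}{\sqrt{\sigma^2+\epsilon}}+\beta$. PASC formulation $\mathcal M$ of $\mathcal N$: (i) the first MatMul layer is computed as in $\mathcal N$ on the input, giving $X$; the first QCFS layer (step $L_1$, threshold $\theta_1$) is replaced by: $\theta^*=\theta_1/L_1$, $\mathrm{mem}(0)=\widehat h(X)$, and for $t=1..L_1$, $s(t)=H(\mathrm{mem}(t-1)-\theta^* )\theta^*$, $\mathrm{mem}(t)=\mathrm{mem}(t-1)-s(t)$, producing $L_1$ timesteps. (ii) Every subsequent MatMul layer receiving $L$ timesteps $z_1,\dots,z_L$ outputs, for each $i$, $z_i'=\gamma\frac{z_i*W+b/L-\mu/L}{\sqrt{\sigma^2+\epsilon}}+\beta/L$.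 (iii) Every subsequent QCFS layer with step $L_n$ and threshold $\theta_n$, receiving $L_{n-1}$ timesteps $X[1..L_{n-1}]$, is replaced by the following elementwise procedure: $\theta^*=\theta_n/L_n$, $m=\theta^*/2$, $s=0$; Stage 1: for $t=1..L_{n-1}$: $m\leftarrow m+X[t]$, and if $m\ge\theta^*$ then $s\leftarrow s+\theta^*$, $m\leftarrow m-\theta^*$; Stage 2: for $t=1..\max(L_{n-1},L_n)-1$: if $m\ge\theta^*$ then $s\leftarrow s+\theta^*$, $m\leftarrow m-\theta^*$, else if $m<0$ then $s\leftarrow s-\theta^*$, $m\leftarrow m+\theta^*$; Stage 3: $\mathrm{mem}(0)=s$ and for $t=1..L_n$, output $H(\mathrm{mem}(t-1)-\theta^* )\theta^*$ at timestep $t$ and subtract it from $\mathrm{mem}$. (iv) If the final MatMul layer outputs $L$ timesteps $z_1,\dots,z_L$, the SNN output vector is $z^*=\frac1L\sum_{i=1}^L z_i$. Classification map: for a model with final output vector $v$ (the ANN's final layer output for $\mathcal N$, the vector $z^*$ for $\mathcal M$) on input $z$, $f^z(c)=v[c]/\sum_{c'\in\mathbf C}v[c']$ for each class $c$ in the set $\mathbf C$ of output classes. Two models are mathematically equivalent if their classification maps coincide for every input. *)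

theory Defs
  imports Complex_Main
begin

(* Vectors (activations) are functions nat => real; a MatMul layer with
   input dimension mm_din reads coordinates 0..mm_din-1 of its input.
   The linear part y*W is an arbitrary real matrix (this covers both
   fully-connected layers and convolutions, which are special linear maps). *)
record matmul =
  mm_din   :: nat
  mm_W     :: "nat \<Rightarrow> nat \<Rightarrow> real"
  mm_b     :: "nat \<Rightarrow> real"
  mm_gamma :: "nat \<Rightarrow> real"
  mm_beta  :: "nat \<Rightarrow> real"
  mm_mu    :: "nat \<Rightarrow> real"
  mm_var   :: "nat \<Rightarrow> real"
  mm_eps   :: real

definition lin :: "matmul \<Rightarrow> (nat \<Rightarrow> real) \<Rightarrow> nat \<Rightarrow> real" where
  "lin M y i = (\<Sum>j<mm_din M. y j * mm_W M j i)"

definition mm_apply :: "matmul \<Rightarrow> (nat \<Rightarrow> real) \<Rightarrow> nat \<Rightarrow> real" where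
  "mm_apply M y = (\<lambda>i. mm_gamma M i * (lin M y i + mm_b M i - mm_mu M i)
                         / sqrt (mm_var M i + mm_eps M) + mm_beta M i)"

(* PASC MatMul layer on one timestep, when L timesteps are received *)
definition mm_apply_t :: "matmul \<Rightarrow> nat \<Rightarrow> (nat \<Rightarrow> real) \<Rightarrow> nat \<Rightarrow> real" where
  "mm_apply_t M L z = (\<lambda>i. mm_gamma M i * (lin M z i + mm_b M i / real L - mm_mu M i / real L)
                         / sqrt (mm_var M i + mm_eps M) + mm_beta M i / real L)"

definition clip01 :: "real \<Rightarrow> real" where
  "clip01 u = min (max u 0) 1"

definition qcfs :: "nat \<Rightarrow> real \<Rightarrow> real \<Rightarrow> real" where
  "qcfs L \<theta> y = \<theta> * clip01 ((1 / real L) * of_int \<lfloor>y * real L / \<theta> + 1/2\<rfloor>)"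

definition Hv :: "real \<Rightarrow> real" where
  "Hv y = (if y \<ge> 0 then 1 else 0)"

primrec spike_mem :: "real \<Rightarrow> real \<Rightarrow> nat \<Rightarrow> real" where
  "spike_mem th mem0 0 = mem0"
| "spike_mem th mem0 (Suc t) =
     spike_mem th mem0 t - Hv (spike_mem th mem0 t - th) * th"

(* spikes s(1..Ln), as a list of length Ln; element k is timestep k+1 *)
definition spike_gen :: "nat \<Rightarrow> real \<Rightarrow> real \<Rightarrow> real list" where
  "spike_gen Ln th mem0 = map (\<lambda>t. Hv (spike_mem th mem0 t - th) * th) [0..<Ln]"

definition stage1_step :: "real \<Rightarrow> real \<times> real \<Rightarrow> real \<Rightarrow> real \<times> real" where
  "stage1_step th st x = (let m = fst st + x in
      if m \<ge> th then (m - th, snd st + th) else (m, snd st))"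

definition stage1 :: "real \<Rightarrow> real list \<Rightarrow> real \<times> real" where
  "stage1 th X = foldl (stage1_step th) (th / 2, 0) X"

definition stage2_step :: "real \<Rightarrow> real \<times> real \<Rightarrow> real \<times> real" where
  "stage2_step th st = (let m = fst st; s = snd st in
      if m \<ge> th then (m - th, s + th)
      else if m < 0 then (m + th, s - th) else (m, s))"

(* PASC neuron replacing a QCFS layer (step Ln, threshold thn), elementwise;
   X is the list of L_{n-1} = length X input timesteps *)
definition pasc_neuron :: "nat \<Rightarrow> real \<Rightarrow> real list \<Rightarrow> real list" where
  "pasc_neuron Ln thn X =
     (let th = thn / real Ln;
          st = (stage2_step th ^^ (max (length X) Ln - 1)) (stage1 th X)
      in spike_gen Ln th (snd st))"

(* Spike trains: list of vectors, one per timestep *)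
definition pasc_qcfs :: "nat \<Rightarrow> real \<Rightarrow> (nat \<Rightarrow> real) list \<Rightarrow> (nat \<Rightarrow> real) list" where
  "pasc_qcfs Ln thn zs =
     map (\<lambda>t i. pasc_neuron Ln thn (map (\<lambda>z. z i) zs) ! t) [0..<Ln]"

(* first QCFS layer replaced: mem(0) = hhat(X), L1 timesteps *)
definition pasc_first :: "nat \<Rightarrow> real \<Rightarrow> (nat \<Rightarrow> real) \<Rightarrow> (nat \<Rightarrow> real) list" where
  "pasc_first L1 th1 X =
     map (\<lambda>t i. spike_gen L1 (th1 / real L1) (qcfs L1 th1 (X i)) ! t) [0..<L1]"

definition mm_step :: "matmul \<Rightarrow> (nat \<Rightarrow> real) list \<Rightarrow> (nat \<Rightarrow> real) list" where
  "mm_step M zs = map (mm_apply_t M (length zs)) zs"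

(* The ANN N: MatMul layers ms (length k+1), QCFS layers qs = [(L_n, theta_n)] (length k) *)
fun ann_eval :: "matmul list \<Rightarrow> (nat \<times> real) list \<Rightarrow> (nat \<Rightarrow> real) \<Rightarrow> nat \<Rightarrow> real" where
  "ann_eval (M # Ms) ((L, \<theta>) # qs) y = ann_eval Ms qs (\<lambda>i. qcfs L \<theta> (mm_apply M y i))"
| "ann_eval [M] [] y = mm_apply M y"
| "ann_eval _ _ y = y"

fun snn_rest :: "matmul list \<Rightarrow> (nat \<times> real) list \<Rightarrow> (nat \<Rightarrow> real) list \<Rightarrow> (nat \<Rightarrow> real) list" where
  "snn_rest (M # Ms) ((L, \<theta>) # qs) zs = snn_rest Ms qs (pasc_qcfs L \<theta> (mm_step M zs))"
| "snn_rest [M] [] zs = mm_step M zs"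
| "snn_rest _ _ zs = zs"

fun snn_eval :: "matmul list \<Rightarrow> (nat \<times> real) list \<Rightarrow> (nat \<Rightarrow> real) \<Rightarrow> (nat \<Rightarrow> real) list" where
  "snn_eval (M # Ms) ((L, \<theta>) # qs) z = snn_rest Ms qs (pasc_first L \<theta> (mm_apply M z))"
| "snn_eval _ _ z = []"

definition snn_out :: "matmul list \<Rightarrow> (nat \<times> real) list \<Rightarrow> (nat \<Rightarrow> real) \<Rightarrow> nat \<Rightarrow> real" where
  "snn_out Ms qs z = (let zs = snn_eval Ms qs z in
      (\<lambda>i. (1 / real (length zs)) * (\<Sum>k<length zs. (zs ! k) i)))"

definition classify :: "(nat \<Rightarrow> real) \<Rightarrow> nat set \<Rightarrow> nat \<Rightarrow> real" where
  "classify v C c = v c / (\<Sum>c'\<in>C. v c')"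

end

theory Submission
  imports Defs
begin

(* Every layer of the PASC network preserves the sum over timesteps of its signal.
   A MatMul layer whose bias terms are divided by the number L of timesteps is affine,
   so the sum of its L outputs is the ANN MatMul layer applied to the sum of its inputs.
   A PASC neuron computes s = th * clip(round(S / th)) for the input sum S: stage 1
   integrates with the offset th/2 that turns truncation into rounding, and whenever
   the residual potential is still outside [0, th) after stage 2, stage 2 has fired in
   the same direction at each of its max(L_(n-1), L_n) - 1 steps, enough to saturate
   the clipping.  Stage 3 emits s as a spike train whose total is s, and the same
   holds for the first layer, fed with the integer multiple qcfs(X) of th.  Hence the
   final timesteps sum to the ANN output, z* is that output divided by L, and the
   classification map is invariant under such a rescaling. *)

definition clip_int :: "nat \<Rightarrow> int \<Rightarrow> int" where
  "clip_int L k = min (max k 0) (int L)"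

lemma clip_int_Suc: "clip_int (Suc L) k = clip_int L k + (if int L < k then 1 else 0)"
  by (simp add: clip_int_def)

lemma Hv_of_int_mult_minus:
  assumes "th > 0"
  shows "Hv (of_int r * th - th) = (if 1 \<le> r then 1 else 0)"
proof -
  have "of_int r * th - th = of_int (r - 1) * th" by (simp add: algebra_simps)
  then show ?thesis using assms by (simp add: Hv_def zero_le_mult_iff)
qed

lemma spike_mem_of_int_mult:
  assumes "th > 0"
  shows "spike_mem th (of_int k * th) t = of_int (k - min (int t) (max k 0)) * th"
proof (induction t)
  case (Suc t)
  define r where "r = k - min (int t) (max k 0)"
  have fires: "1 \<le> r \<longleftrightarrow> int t < k" unfolding r_def by linarith
  have "spike_mem th (of_int k * th) (Suc t) = of_int r * th - Hv (of_int r * th - th) * th"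
    using Suc by (simp add: r_def)
  also have "\<dots> = of_int (r - (if int t < k then 1 else 0)) * th"
    unfolding Hv_of_int_mult_minus[OF assms] fires by (simp add: algebra_simps)
  also have "r - (if int t < k then 1 else 0) = k - min (int (Suc t)) (max k 0)"
    unfolding r_def by auto
  finally show ?case .
qed simp

lemma spike_gen_of_int_mult:
  assumes "th > 0"
  shows "spike_gen L th (of_int k * th) = map (\<lambda>t. if int t < k then th else 0) [0..<L]"
proof -
  have "1 \<le> k - min (int t) (max k 0) \<longleftrightarrow> int t < k" for t by linarith
  then show ?thesis
    unfolding spike_gen_def spike_mem_of_int_mult[OF assms] Hv_of_int_mult_minus[OF assms]
    by simp
qed

lemma sum_list_spike_gen_of_int_mult:
  assumes "th > 0"
  shows "sum_list (spike_gen L th (of_int k * th)) = of_int (clip_int L k) * th"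
  unfolding spike_gen_of_int_mult[OF assms]
proof (induction L)
  case 0
  then show ?case by (simp add: clip_int_def)
next
  case (Suc L)
  then show ?case by (simp add: clip_int_Suc algebra_simps)
qed

lemma qcfs_eq_clip_round:
  assumes "L \<ge> 1" "\<theta> > 0"
  shows "qcfs L \<theta> y = of_int (clip_int L \<lfloor>y / (\<theta> / real L) + 1/2\<rfloor>) * (\<theta> / real L)"
proof -
  define q where "q = \<lfloor>y / (\<theta> / real L) + 1/2\<rfloor>"
  have "qcfs L \<theta> y = \<theta> * min (max (of_int q / real L) 0) 1"
    by (simp add: qcfs_def clip01_def q_def)
  also have "\<dots> = of_int (clip_int L q) * (\<theta> / real L)"
    using assms by (cases "q \<le> 0"; cases "q \<ge> int L") (auto simp: clip_int_def field_simps)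
  finally show ?thesis unfolding q_def .
qed

lemma sum_list_spike_gen_qcfs:
  assumes "L \<ge> 1" "\<theta> > 0"
  shows "sum_list (spike_gen L (\<theta> / real L) (qcfs L \<theta> y)) = qcfs L \<theta> y"
proof -
  define k where "k = clip_int L \<lfloor>y / (\<theta> / real L) + 1/2\<rfloor>"
  have "clip_int L k = k" by (simp add: k_def clip_int_def)
  moreover have "qcfs L \<theta> y = of_int k * (\<theta> / real L)"
    using qcfs_eq_clip_round[OF assms] by (simp add: k_def)
  moreover have "\<theta> / real L > 0" using assms by simp
  ultimately show ?thesis by (simp only: sum_list_spike_gen_of_int_mult)
qed


lemma stage1_invariant:
  assumes "stage1 th X = (m, s)"
  shows "\<exists>j. s = real j * th \<and> j \<le> length X \<and> m + s = th / 2 + sum_list X \<and>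
    (X \<noteq> [] \<longrightarrow> (th \<le> m \<longrightarrow> 1 \<le> j) \<and> (m < 0 \<longrightarrow> j < length X))"
  using assms
proof (induction X arbitrary: m s rule: rev_induct)
  case Nil
  then show ?case by (simp add: stage1_def)
next
  case (snoc x X)
  obtain m0 s0 where st: "stage1 th X = (m0, s0)" by fastforce
  with snoc.IH obtain j where j: "s0 = real j * th" "j \<le> length X" "m0 + s0 = th / 2 + sum_list X"
    by blast
  have step: "stage1_step th (m0, s0) x = (m, s)"
    using snoc.prems st by (simp add: stage1_def)
  show ?case
  proof (cases "th \<le> m0 + x")
    case True
    with step have "m = m0 + x - th" "s = s0 + th" by (auto simp: stage1_step_def)
    with j True show ?thesis by (intro exI[of _ "Suc j"]) (auto simp: algebra_simps)
  next
    case False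
    with step have "m = m0 + x" "s = s0" by (auto simp: stage1_step_def)
    with j False show ?thesis by (intro exI[of _ j]) auto
  qed
qed

lemma stage2_invariant:
  assumes "th > 0" "(stage2_step th ^^ n) (m, of_int k * th) = (m', s')"
  shows "\<exists>k'. s' = of_int k' * th \<and> m' + s' = m + of_int k * th \<and>
    (0 \<le> m' \<and> m' < th \<or> th \<le> m' \<and> th \<le> m \<and> k' = k + int n \<or> m' < 0 \<and> m < 0 \<and> k' = k - int n)"
  using assms(2)
proof (induction n arbitrary: m' s')
  case 0
  then show ?case by (intro exI[of _ k]) auto
next
  case (Suc n)
  obtain m0 s0 where st: "(stage2_step th ^^ n) (m, of_int k * th) = (m0, s0)" by fastforce
  with Suc.IH obtain k0 where k0: "s0 = of_int k0 * th" "m0 + s0 = m + of_int k * th"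
    "0 \<le> m0 \<and> m0 < th \<or> th \<le> m0 \<and> th \<le> m \<and> k0 = k + int n \<or> m0 < 0 \<and> m < 0 \<and> k0 = k - int n"
    by blast
  have step: "stage2_step th (m0, s0) = (m', s')"
    using Suc.prems st by simp
  consider "th \<le> m0" | "m0 < 0" | "0 \<le> m0" "m0 < th" by fastforce
  then show ?case
  proof cases
    case 1
    with step have "m' = m0 - th" "s' = s0 + th" by (auto simp: stage2_step_def)
    with k0 1 assms(1) show ?thesis by (intro exI[of _ "k0 + 1"]) (auto simp: algebra_simps)
  next
    case 2
    with assms(1) step have "m' = m0 + th" "s' = s0 - th" by (auto simp: stage2_step_def)
    with k0 2 assms(1) show ?thesis by (intro exI[of _ "k0 - 1"]) (auto simp: algebra_simps)
  next
    case 3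
    with step have "m' = m0" "s' = s0" by (auto simp: stage2_step_def)
    with k0 3 show ?thesis by (intro exI[of _ k0]) auto
  qed
qed

lemma clip_int_floor_add:
  assumes "0 \<le> x \<and> x < 1 \<or> 1 \<le> x \<and> int L \<le> k \<or> x < 0 \<and> k \<le> 0"
  shows "clip_int L (\<lfloor>x\<rfloor> + k) = clip_int L k"
proof -
  have "\<lfloor>x\<rfloor> = 0 \<or> 1 \<le> \<lfloor>x\<rfloor> \<and> int L \<le> k \<or> \<lfloor>x\<rfloor> < 0 \<and> k \<le> 0"
    using assms by (auto simp: floor_eq_iff)
  then show ?thesis unfolding clip_int_def by arith
qed

lemma sum_list_pasc_neuron:
  assumes "Ln \<ge> 1" "thn > 0" "X \<noteq> []"
  shows "sum_list (pasc_neuron Ln thn X) = qcfs Ln thn (sum_list X)"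
proof -
  define th where "th = thn / real Ln"
  define T where "T = max (length X) Ln - 1"
  have th: "th > 0" using assms by (simp add: th_def)
  obtain m s where st1: "stage1 th X = (m, s)" by fastforce
  with stage1_invariant obtain j where j: "s = real j * th" "m + s = th / 2 + sum_list X"
    "th \<le> m \<longrightarrow> 1 \<le> j" "m < 0 \<longrightarrow> j < length X"
    using assms(3) by blast
  obtain m' s' where st2: "(stage2_step th ^^ T) (m, of_int (int j) * th) = (m', s')" by fastforce
  with stage2_invariant[OF th] obtain k where k: "s' = of_int k * th" "m' + s' = m + of_int (int j) * th"
    "0 \<le> m' \<and> m' < th \<or> th \<le> m' \<and> th \<le> m \<and> k = int j + int T \<or> m' < 0 \<and> m < 0 \<and> k = int j - int T"
    by blast
  \<comment> \<open>a residual outside [0, th) means stage 2 fired the same way at all T steps\<close>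
  have saturated: "0 \<le> m' / th \<and> m' / th < 1 \<or> 1 \<le> m' / th \<and> int Ln \<le> k \<or> m' / th < 0 \<and> k \<le> 0"
    using k(3) j(3,4) th by (auto simp: T_def divide_less_eq le_divide_eq divide_less_0_iff)
  have "sum_list X / th + 1/2 = m' / th + of_int k"
    using j(1,2) k(1,2) th by (simp add: field_simps)
  then have "qcfs Ln thn (sum_list X) = of_int (clip_int Ln k) * th"
    using qcfs_eq_clip_round[OF assms(1,2)] clip_int_floor_add[OF saturated] by (simp add: th_def)
  moreover have "pasc_neuron Ln thn X = spike_gen Ln th (of_int k * th)"
    using st1 st2 j(1) k(1) by (simp add: pasc_neuron_def th_def T_def)
  ultimately show ?thesis by (simp add: sum_list_spike_gen_of_int_mult[OF th])
qed

definition timestep_sum :: "(nat \<Rightarrow> real) list \<Rightarrow> nat \<Rightarrow> real" where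
  "timestep_sum zs i = sum_list (map (\<lambda>z. z i) zs)"

lemma timestep_sum_conv_sum_nth: "timestep_sum zs i = (\<Sum>k<length zs. (zs ! k) i)"
  by (simp add: timestep_sum_def sum_list_sum_nth atLeast0LessThan)

lemma lin_timestep_sum: "lin M (timestep_sum zs) i = sum_list (map (\<lambda>z. lin M z i) zs)"
  by (induction zs) (simp_all add: lin_def timestep_sum_def sum.distrib distrib_right)

lemma mm_step_eq_Nil_iff [simp]: "mm_step M zs = [] \<longleftrightarrow> zs = []"
  by (simp add: mm_step_def)

lemma pasc_qcfs_eq_Nil_iff [simp]: "pasc_qcfs L \<theta> zs = [] \<longleftrightarrow> L = 0"
  by (simp add: pasc_qcfs_def)

lemma pasc_first_eq_Nil_iff [simp]: "pasc_first L \<theta> X = [] \<longleftrightarrow> L = 0"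
  by (simp add: pasc_first_def)

lemma timestep_sum_mm_step:
  assumes "zs \<noteq> []"
  shows "timestep_sum (mm_step M zs) = mm_apply M (timestep_sum zs)"
proof
  fix i
  define a where "a = mm_gamma M i / sqrt (mm_var M i + mm_eps M)"
  define d where "d = a * (mm_b M i - mm_mu M i) + mm_beta M i"
  have n: "real (length zs) > 0" using assms by simp
  have "mm_apply_t M (length zs) z i = a * lin M z i + d / real (length zs)" for z
    by (simp add: mm_apply_t_def a_def d_def add_divide_distrib diff_divide_distrib algebra_simps)
  then have "timestep_sum (mm_step M zs) i =
      a * lin M (timestep_sum zs) i + real (length zs) * (d / real (length zs))"
    by (simp add: timestep_sum_def mm_step_def o_def lin_timestep_sum
        sum_list_addf sum_list_const_mult sum_list_triv)
  also have "\<dots> = mm_apply M (timestep_sum zs) i"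
    using n by (simp add: mm_apply_def a_def d_def add_divide_distrib diff_divide_distrib algebra_simps)
  finally show "timestep_sum (mm_step M zs) i = mm_apply M (timestep_sum zs) i" .
qed

lemma timestep_sum_pasc_qcfs:
  assumes "L \<ge> 1" "\<theta> > 0" "zs \<noteq> []"
  shows "timestep_sum (pasc_qcfs L \<theta> zs) = (\<lambda>i. qcfs L \<theta> (timestep_sum zs i))"
proof
  fix i
  define train where "train = pasc_neuron L \<theta> (map (\<lambda>z. z i) zs)"
  have "length train = L"
    by (simp add: train_def pasc_neuron_def Let_def spike_gen_def)
  then have "map ((!) train) [0..<L] = train"
    by (metis map_nth)
  then have "timestep_sum (pasc_qcfs L \<theta> zs) i = sum_list train"
    by (simp add: timestep_sum_def pasc_qcfs_def o_def train_def[symmetric])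
  also have "\<dots> = qcfs L \<theta> (timestep_sum zs i)"
    using sum_list_pasc_neuron[OF assms(1,2)] assms(3) by (simp add: train_def timestep_sum_def)
  finally show "timestep_sum (pasc_qcfs L \<theta> zs) i = qcfs L \<theta> (timestep_sum zs i)" .
qed

lemma timestep_sum_pasc_first:
  assumes "L \<ge> 1" "\<theta> > 0"
  shows "timestep_sum (pasc_first L \<theta> X) = (\<lambda>i. qcfs L \<theta> (X i))"
proof
  fix i
  define train where "train = spike_gen L (\<theta> / real L) (qcfs L \<theta> (X i))"
  have "length train = L"
    by (simp add: train_def spike_gen_def)
  then have "map ((!) train) [0..<L] = train"
    by (metis map_nth)
  then have "timestep_sum (pasc_first L \<theta> X) i = sum_list train"
    by (simp add: timestep_sum_def pasc_first_def o_def train_def[symmetric])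
  then show "timestep_sum (pasc_first L \<theta> X) i = qcfs L \<theta> (X i)"
    using sum_list_spike_gen_qcfs[OF assms] by (simp add: train_def)
qed

lemma snn_rest_not_Nil:
  assumes "length Ms = length qs + 1" "\<forall>(L, \<theta>) \<in> set qs. L \<ge> 1" "zs \<noteq> []"
  shows "snn_rest Ms qs zs \<noteq> []"
  using assms
proof (induction Ms qs zs rule: snn_rest.induct)
  case (1 M Ms L \<theta> qs zs)
  then show ?case by auto
qed auto

lemma timestep_sum_snn_rest:
  assumes "length Ms = length qs + 1" "\<forall>(L, \<theta>) \<in> set qs. L \<ge> 1 \<and> \<theta> > 0" "zs \<noteq> []"
  shows "timestep_sum (snn_rest Ms qs zs) = ann_eval Ms qs (timestep_sum zs)"
  using assms
proof (induction Ms qs zs rule: snn_rest.induct)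
  case (1 M Ms L \<theta> qs zs)
  then have "L \<ge> 1" "\<theta> > 0" by auto
  with 1 show ?case
    by (auto simp: timestep_sum_pasc_qcfs timestep_sum_mm_step)
qed (auto simp: timestep_sum_mm_step)

lemma snn_out_conv_timestep_sum:
  "snn_out Ms qs z = (\<lambda>i. timestep_sum (snn_eval Ms qs z) i / real (length (snn_eval Ms qs z)))"
  by (simp add: snn_out_def Let_def timestep_sum_conv_sum_nth)

lemma classify_scale:
  assumes "a \<noteq> 0"
  shows "classify (\<lambda>i. v i / a) C c = classify v C c"
  using assms by (simp add: classify_def sum_divide_distrib[symmetric])

theorem theorem4:
  fixes Ms :: "matmul list" and qs :: "(nat \<times> real) list"
    and nC :: nat and z :: "nat \<Rightarrow> real" and c :: nat
  assumes "qs \<noteq> []"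
    and "length Ms = length qs + 1"
    and "\<forall>(L, \<theta>) \<in> set qs. L \<ge> 1 \<and> \<theta> > 0"
    and "c < nC"
  shows "classify (snn_out Ms qs z) {..<nC} c = classify (ann_eval Ms qs z) {..<nC} c"
proof -
  obtain M Ms' L \<theta> qs' where Ms: "Ms = M # Ms'" and qs: "qs = (L, \<theta>) # qs'"
    using assms(1,2) by (cases Ms; cases qs) auto
  have L: "L \<ge> 1" "\<theta> > 0" and rest: "length Ms' = length qs' + 1"
    "\<forall>(L, \<theta>) \<in> set qs'. L \<ge> 1 \<and> \<theta> > 0"
    using assms(2,3) by (auto simp: Ms qs)
  define zs where "zs = pasc_first L \<theta> (mm_apply M z)"
  have zs: "zs \<noteq> []" "timestep_sum zs = (\<lambda>i. qcfs L \<theta> (mm_apply M z i))"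
    using timestep_sum_pasc_first[OF L] L by (auto simp: zs_def)
  have out: "snn_eval Ms qs z = snn_rest Ms' qs' zs"
    by (simp add: Ms qs zs_def)
  have "snn_eval Ms qs z \<noteq> []"
    unfolding out using snn_rest_not_Nil[OF rest(1) _ zs(1)] rest(2) by fastforce
  moreover have "timestep_sum (snn_eval Ms qs z) = ann_eval Ms qs z"
    unfolding out timestep_sum_snn_rest[OF rest zs(1)] by (simp add: Ms qs zs(2))
  ultimately show ?thesis
    by (simp add: snn_out_conv_timestep_sum classify_scale)
qed

end
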